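(* Let $x_1,\dots,x_n$ be independent random variables with absolutely continuous CDFs $F_1,\dots,F_n$, and let $\widehat F$ be their empirical CDF, $\widehat F(x)=\frac1n\sum_{i=1}^n\mathbf{1}\{x_i\le x\}$. Let $\phi=\max_{i\in\{1,\dots,n\}}\|F_i-F_n\|_\infty$. For any $\gamma,\delta\in(0,1)$, $$\mathbb{P}\Big(F_n\big(\mathsf{Q}^+_\gamma(\widehat F)\big)-\gamma\le\phi+\min_{\varepsilon\in(0,1)}\Big\{\frac{R(n,\varepsilon,\gamma,\delta)}{1-\varepsilon}\Big\}\Big)\ge1-\delta,$$ and the same bound holds for $\gamma-F_n\big(\mathsf{Q}^-_\gamma(\widehat F)\big)$ in place of $F_n\big(\mathsf{Q}^+_\gamma(\widehat F)\big)-\gamma$.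
   Context: For a CDF $F$ and $\gamma\in(0,1)$: $\mathsf{Q}^-_\gamma(F)=\inf\{x:F(x)\ge\gamma\}$ and $\mathsf{Q}^+_\gamma(F)=\inf\{x:F(x)>\gamma\}$. For $n\in\mathbb{Z}_+$, $\varepsilon>0$, $\gamma,\delta\in(0,1)$, define $R(n,\varepsilon,\gamma,\delta)=\sqrt{\frac{2\gamma(1-\gamma)\log(1/\delta)}{n}}+\Big(\frac23+\frac1{2\varepsilon}\Big)\frac{\log(1/\delta)}{n}$. *)

theory Defs
  imports "HOL-Probability.Probability"
begin

definition Qminus :: "real \<Rightarrow> (real \<Rightarrow> real) \<Rightarrow> real" where
  "Qminus \<gamma> F = Inf {x. F x \<ge> \<gamma>}"

definition Qplus :: "real \<Rightarrow> (real \<Rightarrow> real) \<Rightarrow> real" where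
  "Qplus \<gamma> F = Inf {x. F x > \<gamma>}"

definition R :: "nat \<Rightarrow> real \<Rightarrow> real \<Rightarrow> real \<Rightarrow> real" where
  "R n \<epsilon> \<gamma> \<delta> =
     sqrt (2 * \<gamma> * (1 - \<gamma>) * ln (1 / \<delta>) / real n)
     + (2/3 + 1 / (2 * \<epsilon>)) * ln (1 / \<delta>) / real n"

definition ecdf :: "nat \<Rightarrow> (nat \<Rightarrow> real) \<Rightarrow> real \<Rightarrow> real" where
  "ecdf n x t = real (card {i \<in> {1..n}. x i \<le> t}) / real n"

end

theory Submission
  imports Defs
begin

(* Let m be the infimum of R(n, epsilon, gamma, delta) / (1 - epsilon) over epsilon and
   c = gamma + phi + m. Since F_n is continuous there is a point q with F_n q = c and
   F_n x <= c exactly for x <= q, so the event F_n(Q+) - gamma <= phi + m says that more than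
   gamma n of the samples are <= q. Because |F_i - F_n| <= phi, the probabilities
   p_i = P(x_i <= q) average to gamma + s with s >= m, so the complementary event is a
   downward deviation by n s of a sum of independent indicators. Bernstein's inequality with
   variance proxy n (gamma (1 - gamma) + s) bounds its probability by delta as soon as
   ln(1/delta) (2 (gamma (1 - gamma) + s) + 2 s / 3) <= n s^2, and by AM-GM this follows from
   R(n, epsilon, gamma, delta) <= (1 - epsilon) s. The bound for Q- is symmetric, with the
   level gamma - phi - m and the count of samples < q. *)

section \<open>Bernstein's inequality for sums of independent indicators\<close>

lemma two_mult_three_power_le_fact: "2 * 3 ^ n \<le> (fact (n + 2) :: nat)"
proof (induction n)
  case (Suc n)
  have "2 * 3 ^ Suc n = 3 * (2 * 3 ^ n :: nat)" by simp
  also have "\<dots> \<le> 3 * fact (n + 2)" using Suc.IH by simp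
  also have "\<dots> \<le> (n + 3) * fact (n + 2)" by (intro mult_right_mono) auto
  also have "\<dots> = fact (Suc n + 2)" by (simp add: algebra_simps)
  finally show ?case .
qed simp

lemma summable_exp_tail: "summable (\<lambda>n. inverse (fact (n + 2)) * (x::real) ^ (n + 2))"
  using summable_ignore_initial_segment[OF summable_exp_generic[of x], of 2] by simp

lemma exp_mult_le_quadratic:
  fixes l z :: real
  assumes l: "0 \<le> l" and z: "\<bar>z\<bar> \<le> 1"
  shows "exp (l * z) \<le> 1 + l * z + z\<^sup>2 * (exp l - 1 - l)"
proof -
  have "exp (l * z) - 1 - l * z = (\<Sum>n. inverse (fact (n + 2)) * (l * z) ^ (n + 2))"
    using exp_first_two_terms[of "l * z"] by simp
  also have "\<dots> \<le> (\<Sum>n. z\<^sup>2 * (inverse (fact (n + 2)) * l ^ (n + 2)))"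
  proof (rule suminf_le)
    fix n
    have "z ^ n \<le> 1"
      using power_le_one[of "\<bar>z\<bar>" n] z by (metis abs_ge_self order.trans power_abs abs_ge_zero)
    have "(l * z) ^ (n + 2) = z\<^sup>2 * (l ^ (n + 2) * z ^ n)"
      by (simp add: power_mult_distrib power_add power2_eq_square ac_simps)
    also have "\<dots> \<le> z\<^sup>2 * l ^ (n + 2)"
      using \<open>z ^ n \<le> 1\<close> l by (intro mult_left_mono mult_left_le) auto
    finally have "(l * z) ^ (n + 2) \<le> z\<^sup>2 * l ^ (n + 2)" .
    then have "inverse (fact (n + 2)) * (l * z) ^ (n + 2) \<le> inverse (fact (n + 2)) * (z\<^sup>2 * l ^ (n + 2))"
      by (rule mult_left_mono) simp
    then show "inverse (fact (n + 2)) * (l * z) ^ (n + 2) \<le> z\<^sup>2 * (inverse (fact (n + 2)) * l ^ (n + 2))"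
      by (metis mult.left_commute)
  qed (use summable_exp_tail summable_mult in auto)
  also have "\<dots> = z\<^sup>2 * (\<Sum>n. inverse (fact (n + 2)) * l ^ (n + 2))"
    by (intro suminf_mult summable_exp_tail)
  also have "(\<Sum>n. inverse (fact (n + 2)) * l ^ (n + 2)) = exp l - 1 - l"
    using exp_first_two_terms[of l] by simp
  finally show ?thesis by simp
qed

lemma exp_minus_one_minus_le:
  fixes l :: real
  assumes l: "0 \<le> l" "l < 3"
  shows "exp l - 1 - l \<le> l\<^sup>2 / (2 * (1 - l / 3))"
proof -
  have geom: "summable (\<lambda>n. (l / 3) ^ n)" using l by (intro summable_geometric) auto
  have "exp l - 1 - l = (\<Sum>n. inverse (fact (n + 2)) * l ^ (n + 2))"
    using exp_first_two_terms[of l] by simp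
  also have "\<dots> \<le> (\<Sum>n. l\<^sup>2 / 2 * (l / 3) ^ n)"
  proof (rule suminf_le)
    fix n
    have "real (2 * 3 ^ n) \<le> real (fact (n + 2))"
      using two_mult_three_power_le_fact[of n] by (simp only: of_nat_le_iff)
    then have "(2 * 3 ^ n :: real) \<le> fact (n + 2)"
      by (simp only: of_nat_fact of_nat_mult of_nat_power of_nat_numeral)
    then have "l ^ (n + 2) / fact (n + 2) \<le> l ^ (n + 2) / (2 * 3 ^ n)"
      using l by (intro divide_left_mono) auto
    also have "\<dots> = l\<^sup>2 / 2 * (l / 3) ^ n"
      by (simp add: power_add power_divide power2_eq_square)
    finally show "inverse (fact (n + 2)) * l ^ (n + 2) \<le> l\<^sup>2 / 2 * (l / 3) ^ n"
      by (metis divide_inverse mult.commute)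
  qed (use summable_exp_tail geom summable_mult in auto)
  also have "\<dots> = l\<^sup>2 / 2 * (\<Sum>n. (l / 3) ^ n)"
    by (intro suminf_mult geom)
  also have "(\<Sum>n. (l / 3) ^ n) = 1 / (1 - l / 3)"
    using l by (intro suminf_geometric) auto
  finally show ?thesis by simp
qed

lemma centered_bernoulli_mgf_le:
  fixes p l \<sigma> :: real
  assumes p: "0 \<le> p" "p \<le> 1" and \<sigma>: "\<bar>\<sigma>\<bar> = 1" and l: "0 \<le> l" "l < 3"
  shows "(1 - p) * exp (l * (\<sigma> * (0 - p))) + p * exp (l * (\<sigma> * (1 - p)))
           \<le> exp (l\<^sup>2 / (2 * (1 - l / 3)) * (p * (1 - p)))"
proof -
  define G where "G = exp l - 1 - l"
  have \<sigma>2: "\<sigma>\<^sup>2 = 1" using \<sigma> by (metis power2_abs power_one)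
  have quad: "exp (l * (\<sigma> * y)) \<le> 1 + l * (\<sigma> * y) + (\<sigma> * y)\<^sup>2 * G" if "\<bar>y\<bar> \<le> 1" for y
    unfolding G_def using that \<sigma> l by (intro exp_mult_le_quadratic) (auto simp: abs_mult)
  have "(1 - p) * exp (l * (\<sigma> * (0 - p))) + p * exp (l * (\<sigma> * (1 - p)))
      \<le> (1 - p) * (1 + l * (\<sigma> * (0 - p)) + (\<sigma> * (0 - p))\<^sup>2 * G)
        + p * (1 + l * (\<sigma> * (1 - p)) + (\<sigma> * (1 - p))\<^sup>2 * G)"
    using quad[of "0 - p"] quad[of "1 - p"] p by (intro add_mono mult_left_mono) auto
  also have "\<dots> = 1 + \<sigma>\<^sup>2 * G * (p * (1 - p))"
    by (simp add: power2_eq_square algebra_simps)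
  also have "\<dots> \<le> exp (G * (p * (1 - p)))"
    using \<sigma>2 exp_ge_add_one_self by simp
  also have "\<dots> \<le> exp (l\<^sup>2 / (2 * (1 - l / 3)) * (p * (1 - p)))"
    using exp_minus_one_minus_le[OF l] p unfolding G_def by (intro exp_mono mult_right_mono) auto
  finally show ?thesis .
qed

lemma sum_mult_one_minus_le_mean:
  fixes p :: "'i \<Rightarrow> real"
  assumes "finite I" "I \<noteq> {}"
  shows "(\<Sum>i\<in>I. p i * (1 - p i))
           \<le> card I * ((\<Sum>i\<in>I. p i) / card I * (1 - (\<Sum>i\<in>I. p i) / card I))"
proof -
  have N: "0 < real (card I)" using assms by (simp add: card_gt_0_iff)
  have "(\<Sum>i\<in>I. p i)\<^sup>2 / card I \<le> (\<Sum>i\<in>I. (p i)\<^sup>2)"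
    using sum_squared_le_sum_of_squares[of p I] N by (simp add: divide_le_eq)
  moreover have "card I * ((\<Sum>i\<in>I. p i) / card I * (1 - (\<Sum>i\<in>I. p i) / card I)) = (\<Sum>i\<in>I. p i) - (\<Sum>i\<in>I. p i)\<^sup>2 / card I"
    using N by (simp add: power2_eq_square field_simps)
  moreover have "(\<Sum>i\<in>I. p i * (1 - p i)) = (\<Sum>i\<in>I. p i) - (\<Sum>i\<in>I. (p i)\<^sup>2)"
    by (simp add: algebra_simps power2_eq_square sum_subtractf)
  ultimately show ?thesis by linarith
qed

lemma mult_one_minus_le_add_abs:
  fixes p \<gamma> :: real
  assumes "0 \<le> p + \<gamma>" "p + \<gamma> \<le> 2"
  shows "p * (1 - p) \<le> \<gamma> * (1 - \<gamma>) + \<bar>p - \<gamma>\<bar>"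
proof -
  have "p * (1 - p) - \<gamma> * (1 - \<gamma>) = (p - \<gamma>) * (1 - p - \<gamma>)" by (simp add: algebra_simps)
  also have "\<dots> \<le> \<bar>p - \<gamma>\<bar> * \<bar>1 - p - \<gamma>\<bar>" by (metis abs_ge_self abs_mult)
  also have "\<dots> \<le> \<bar>p - \<gamma>\<bar>" using assms by (intro mult_left_le) auto
  finally show ?thesis by simp
qed

context prob_space
begin

lemma prob_sum_ge_le_exp_prod_nn_integral:
  fixes Z :: "'i \<Rightarrow> 'a \<Rightarrow> real"
  assumes fin: "finite I" and indep: "indep_vars (\<lambda>_. borel) Z I" and l: "0 < l"
  shows "ennreal (prob {\<omega> \<in> space M. t \<le> (\<Sum>i\<in>I. Z i \<omega>)})
           \<le> ennreal (exp (- l * t)) * (\<Prod>i\<in>I. \<integral>\<^sup>+\<omega>. ennreal (exp (l * Z i \<omega>)) \<partial>M)"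
proof -
  have [measurable]: "Z i \<in> borel_measurable M" if "i \<in> I" for i
    using indep that unfolding indep_vars_def by auto
  have "ennreal (prob {\<omega> \<in> space M. t \<le> (\<Sum>i\<in>I. Z i \<omega>)})
      \<le> ennreal (exp (- l * t)) * (\<integral>\<^sup>+\<omega>\<in>space M. exp (l * (\<Sum>i\<in>I. Z i \<omega>)) \<partial>M)"
    unfolding emeasure_eq_measure[symmetric] using l by (intro Chernoff_ineq_nn_integral_ge) auto
  also have "(\<integral>\<^sup>+\<omega>\<in>space M. exp (l * (\<Sum>i\<in>I. Z i \<omega>)) \<partial>M)
      = (\<integral>\<^sup>+\<omega>. (\<Prod>i\<in>I. ennreal (exp (l * Z i \<omega>))) \<partial>M)"
    by (intro nn_integral_cong) (simp add: sum_distrib_left exp_sum fin prod_ennreal)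
  also have "\<dots> = (\<Prod>i\<in>I. \<integral>\<^sup>+\<omega>. ennreal (exp (l * Z i \<omega>)) \<partial>M)"
    by (intro indep_vars_nn_integral fin indep_vars_compose2[OF indep]) auto
  finally show ?thesis .
qed

lemma nn_integral_exp_centered_indicator:
  assumes [measurable]: "X \<in> borel_measurable M" "B \<in> sets borel"
    and p: "p = prob {\<omega> \<in> space M. X \<omega> \<in> B}"
  shows "(\<integral>\<^sup>+\<omega>. ennreal (exp (l * (\<sigma> * (indicator B (X \<omega>) - p)))) \<partial>M)
          = ennreal ((1 - p) * exp (l * (\<sigma> * (0 - p))) + p * exp (l * (\<sigma> * (1 - p))))"
proof -
  define A where "A = {\<omega> \<in> space M. X \<omega> \<in> B}"
  have A[measurable]: "A \<in> sets M" unfolding A_def by measurable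
  define e0 where "e0 = exp (l * (\<sigma> * (0 - p)))"
  define e1 where "e1 = exp (l * (\<sigma> * (1 - p)))"
  have p01: "0 \<le> p" "p \<le> 1" and e: "0 \<le> e0" "0 \<le> e1" using p by (auto simp: e0_def e1_def)
  have "(\<integral>\<^sup>+\<omega>. ennreal (exp (l * (\<sigma> * (indicator B (X \<omega>) - p)))) \<partial>M)
      = (\<integral>\<^sup>+\<omega>. ennreal e0 * indicator (space M - A) \<omega> + ennreal e1 * indicator A \<omega> \<partial>M)"
    by (intro nn_integral_cong) (auto simp: A_def e0_def e1_def indicator_def)
  also have "\<dots> = ennreal e0 * emeasure M (space M - A) + ennreal e1 * emeasure M A"
    by (subst nn_integral_add) (auto simp: nn_integral_cmult_indicator)
  also have "\<dots> = ennreal ((1 - p) * e0 + p * e1)"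
    using prob_compl[OF A] p01 e
    by (simp add: emeasure_eq_measure p A_def ennreal_mult' mult.commute)
  finally show ?thesis by (simp add: e0_def e1_def)
qed

lemma Bernstein_ineq_indicator_sum:
  fixes X :: "'i \<Rightarrow> 'a \<Rightarrow> real" and B :: "'i \<Rightarrow> real set" and p :: "'i \<Rightarrow> real"
  assumes fin: "finite I" and indep: "indep_vars (\<lambda>_. borel) X I"
    and B: "\<And>i. i \<in> I \<Longrightarrow> B i \<in> sets borel"
    and p: "\<And>i. i \<in> I \<Longrightarrow> p i = prob {\<omega> \<in> space M. X i \<omega> \<in> B i}"
    and \<sigma>: "\<bar>\<sigma>\<bar> = 1" and V: "(\<Sum>i\<in>I. p i * (1 - p i)) \<le> V" "0 < V" and t: "0 < t"
  shows "prob {\<omega> \<in> space M. t \<le> \<sigma> * (\<Sum>i\<in>I. indicator (B i) (X i \<omega>) - p i)}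
           \<le> exp (- t\<^sup>2 / (2 * (V + t / 3)))"
proof -
  have [measurable]: "X i \<in> borel_measurable M" "B i \<in> sets borel" if "i \<in> I" for i
    using indep B that unfolding indep_vars_def by auto
  define W where "W = V + t / 3"
  define l where "l = t / W"
  define \<psi> where "\<psi> = l\<^sup>2 / (2 * (1 - l / 3))"
  have W: "0 < W" using V t by (simp add: W_def)
  have l: "0 < l" "l < 3" using W V t by (auto simp: l_def W_def field_simps)
  have \<psi>V: "- l * t + \<psi> * V = - t\<^sup>2 / (2 * W)"
  proof -
    have "1 - l / 3 = V / W" using W by (simp add: l_def W_def field_simps)
    then have "\<psi> * V = l\<^sup>2 * W / 2" using V by (simp add: \<psi>_def)
    also have "\<dots> = t\<^sup>2 / (2 * W)" using W by (simp add: l_def power2_eq_square)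
    finally have "\<psi> * V = t\<^sup>2 / (2 * W)" .
    then show ?thesis using W by (simp add: l_def power2_eq_square field_simps)
  qed
  have "ennreal (prob {\<omega> \<in> space M. t \<le> (\<Sum>i\<in>I. \<sigma> * (indicator (B i) (X i \<omega>) - p i))})
      \<le> ennreal (exp (- l * t))
        * (\<Prod>i\<in>I. \<integral>\<^sup>+\<omega>. ennreal (exp (l * (\<sigma> * (indicator (B i) (X i \<omega>) - p i)))) \<partial>M)"
    using fin l by (intro prob_sum_ge_le_exp_prod_nn_integral indep_vars_compose2[OF indep]) auto
  also have "\<dots> \<le> ennreal (exp (- l * t)) * (\<Prod>i\<in>I. ennreal (exp (\<psi> * (p i * (1 - p i)))))"
  proof (intro mult_left_mono prod_mono_ennreal)
    fix i assume i: "i \<in> I"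
    have "0 \<le> p i" "p i \<le> 1" using p[OF i] by auto
    have "(\<integral>\<^sup>+\<omega>. ennreal (exp (l * (\<sigma> * (indicator (B i) (X i \<omega>) - p i)))) \<partial>M)
        = ennreal ((1 - p i) * exp (l * (\<sigma> * (0 - p i))) + p i * exp (l * (\<sigma> * (1 - p i))))"
      using i p by (intro nn_integral_exp_centered_indicator) auto
    also have "\<dots> \<le> ennreal (exp (\<psi> * (p i * (1 - p i))))"
      unfolding \<psi>_def using \<open>0 \<le> p i\<close> \<open>p i \<le> 1\<close> \<sigma> l
      by (intro ennreal_leI centered_bernoulli_mgf_le) auto
    finally show "(\<integral>\<^sup>+\<omega>. ennreal (exp (l * (\<sigma> * (indicator (B i) (X i \<omega>) - p i)))) \<partial>M)
        \<le> ennreal (exp (\<psi> * (p i * (1 - p i))))" .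
  qed auto
  also have "\<dots> = ennreal (exp (- l * t) * (\<Prod>i\<in>I. exp (\<psi> * (p i * (1 - p i)))))"
    by (simp add: prod_ennreal prod_nonneg flip: ennreal_mult)
  also have "exp (- l * t) * (\<Prod>i\<in>I. exp (\<psi> * (p i * (1 - p i))))
      = exp (- l * t + \<psi> * (\<Sum>i\<in>I. p i * (1 - p i)))"
    by (simp only: exp_add exp_sum[OF fin] sum_distrib_left)
  also have "\<dots> \<le> ennreal (exp (- l * t + \<psi> * V))"
    using V l by (intro ennreal_leI exp_mono add_left_mono mult_left_mono) (auto simp: \<psi>_def)
  finally show ?thesis
    unfolding \<psi>V W_def by (simp add: sum_distrib_left)
qed

end

section \<open>Deviations beyond the rate \<open>R\<close>\<close>

lemma Bernstein_exponent_ge_if_R_le: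
  fixes \<epsilon> s \<gamma> \<delta> :: real and n :: nat
  assumes n: "n \<ge> 1" and \<epsilon>: "0 < \<epsilon>" "\<epsilon> < 1" and s: "0 \<le> s"
    and \<gamma>: "0 \<le> \<gamma>" "\<gamma> \<le> 1" and \<delta>: "0 < \<delta>" "\<delta> < 1"
    and R: "R n \<epsilon> \<gamma> \<delta> \<le> (1 - \<epsilon>) * s"
  shows "ln (1 / \<delta>) * (2 * (\<gamma> * (1 - \<gamma>) + s) + 2 * s / 3) \<le> n * s\<^sup>2"
proof -
  define N where "N = real n"
  define L where "L = ln (1 / \<delta>)"
  have N: "N > 0" using n by (simp add: N_def)
  have L: "L > 0" using \<delta> by (simp add: L_def)
  have v: "0 \<le> \<gamma> * (1 - \<gamma>)" using \<gamma> by auto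
  define a where "a = sqrt (2 * \<gamma> * (1 - \<gamma>) * L / N)"
  define u where "u = sqrt (2 * (\<gamma> * (1 - \<gamma>) + s) * L / N)"
  have "u = sqrt (2 * \<gamma> * (1 - \<gamma>) * L / N + 2 * s * L / N)"
    unfolding u_def using N by (simp add: field_simps)
  also have "\<dots> \<le> a + sqrt (2 * s * L / N)"
    unfolding a_def using v s L N by (intro sqrt_add_le_add_sqrt) auto
  \<comment> \<open>AM-GM; the source of the \<open>1 / (2 \<epsilon>)\<close> term of \<open>R\<close>\<close>
  also have "sqrt (2 * s * L / N) \<le> \<epsilon> * s + L / (2 * \<epsilon> * N)"
  proof (rule real_le_lsqrt)
    show "0 \<le> \<epsilon> * s + L / (2 * \<epsilon> * N)" using \<epsilon> s L N by auto
    have "(\<epsilon> * s + L / (2 * \<epsilon> * N))\<^sup>2 = (\<epsilon> * s - L / (2 * \<epsilon> * N))\<^sup>2 + 2 * s * L / N"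
      using \<epsilon> N by (simp add: power2_eq_square field_simps)
    then show "2 * s * L / N \<le> (\<epsilon> * s + L / (2 * \<epsilon> * N))\<^sup>2" by simp
  qed
  also have "a + (\<epsilon> * s + L / (2 * \<epsilon> * N)) = R n \<epsilon> \<gamma> \<delta> - 2 / 3 * L / N + \<epsilon> * s"
    unfolding R_def a_def L_def N_def using \<epsilon> n by (simp add: field_simps)
  finally have u: "u \<le> s - 2 / 3 * L / N" using R by (simp add: algebra_simps)
  have "2 * (\<gamma> * (1 - \<gamma>) + s) * L / N = u * u"
    unfolding u_def using v s L N by simp
  also have "\<dots> \<le> s * (s - 2 / 3 * L / N)"
  proof -
    have "0 \<le> u" "0 \<le> 2 / 3 * L / N" using v s L N by (auto simp: u_def)
    then show ?thesis using u by (intro mult_mono) auto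
  qed
  finally have "N * (2 * (\<gamma> * (1 - \<gamma>) + s) * L / N) \<le> N * (s * (s - 2 / 3 * L / N))"
    using N by (intro mult_left_mono) auto
  moreover have "N * (s * (s - 2 / 3 * L / N)) = N * s\<^sup>2 - 2 / 3 * L * s"
    using N by (simp add: power2_eq_square field_simps)
  moreover have "L * (2 * (\<gamma> * (1 - \<gamma>) + s) + 2 * s / 3) = 2 * (\<gamma> * (1 - \<gamma>) + s) * L + 2 / 3 * L * s"
    by (simp add: algebra_simps)
  ultimately show ?thesis using N by (simp add: L_def[symmetric] N_def[symmetric])
qed

definition R_Inf :: "nat \<Rightarrow> real \<Rightarrow> real \<Rightarrow> real" where
  "R_Inf n \<gamma> \<delta> = (INF \<epsilon>\<in>{0<..<1}. R n \<epsilon> \<gamma> \<delta> / (1 - \<epsilon>))"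

lemma R_nonneg:
  assumes "0 \<le> \<gamma>" "\<gamma> \<le> 1" "0 < \<delta>" "\<delta> \<le> 1" "0 < \<epsilon>"
  shows "0 \<le> R n \<epsilon> \<gamma> \<delta>"
  using assms unfolding R_def by (intro add_nonneg_nonneg divide_nonneg_nonneg) auto

lemma R_Inf_nonneg:
  assumes "0 \<le> \<gamma>" "\<gamma> \<le> 1" "0 < \<delta>" "\<delta> \<le> 1"
  shows "0 \<le> R_Inf n \<gamma> \<delta>"
  unfolding R_Inf_def using assms R_nonneg by (intro cINF_greatest) auto

lemma Bernstein_exponent_ge_if_R_Inf_le:
  fixes s \<gamma> \<delta> :: real and n :: nat
  assumes n: "n \<ge> 1" and \<gamma>: "0 < \<gamma>" "\<gamma> < 1" and \<delta>: "0 < \<delta>" "\<delta> < 1"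
    and s: "R_Inf n \<gamma> \<delta> \<le> s"
  shows "0 < s" "ln (1 / \<delta>) * (2 * (\<gamma> * (1 - \<gamma>) + s) + 2 * s / 3) \<le> n * s\<^sup>2"
proof -
  define m where "m = R_Inf n \<gamma> \<delta>"
  define h where "h = (\<lambda>s::real. n * s\<^sup>2 - ln (1 / \<delta>) * (2 * (\<gamma> * (1 - \<gamma>) + s) + 2 * s / 3))"
  have m: "0 \<le> m" unfolding m_def using \<gamma> \<delta> by (intro R_Inf_nonneg) auto
  have bdd: "bdd_below ((\<lambda>\<epsilon>. R n \<epsilon> \<gamma> \<delta> / (1 - \<epsilon>)) ` {0<..<1})"
    using \<gamma> \<delta> R_nonneg by (intro bdd_belowI2[of _ 0]) auto
  have above: "0 \<le> h s'" if "m < s'" for s'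
  proof -
    obtain \<epsilon> where \<epsilon>: "\<epsilon> \<in> {0<..<1}" "R n \<epsilon> \<gamma> \<delta> / (1 - \<epsilon>) < s'"
      using \<open>m < s'\<close> cINF_less_iff[OF _ bdd] unfolding m_def R_Inf_def by auto
    then have "R n \<epsilon> \<gamma> \<delta> \<le> (1 - \<epsilon>) * s'" by (simp add: field_simps)
    then show ?thesis
      unfolding h_def using Bernstein_exponent_ge_if_R_le[of n \<epsilon> s' \<gamma> \<delta>] n \<epsilon> m that \<gamma> \<delta> by auto
  qed
  \<comment> \<open>the infimum need not be attained, so the condition at \<open>m\<close> itself comes from continuity\<close>
  have "0 \<le> h m"
  proof (rule tendsto_lowerbound)
    show "(h \<longlongrightarrow> h m) (at_right m)" unfolding h_def by (intro tendsto_intros) auto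
    show "\<forall>\<^sub>F s' in at_right m. 0 \<le> h s'"
      using above by (auto simp: eventually_at_filter)
  qed simp
  then have hs: "0 \<le> h s" using above s unfolding m_def[symmetric] by (cases "s = m") auto
  then show "ln (1 / \<delta>) * (2 * (\<gamma> * (1 - \<gamma>) + s) + 2 * s / 3) \<le> n * s\<^sup>2"
    by (simp add: h_def)
  have "h 0 < 0" using \<gamma> \<delta> by (simp add: h_def)
  then show "0 < s" using hs s m unfolding m_def by (cases "s = 0") auto
qed

lemma (in prob_space) prob_signed_indicator_sum_less_ge:
  fixes X :: "'i \<Rightarrow> 'a \<Rightarrow> real" and B :: "'i \<Rightarrow> real set"
  assumes I: "finite I" "I \<noteq> {}" and indep: "indep_vars (\<lambda>_. borel) X I"
    and B: "\<And>i. i \<in> I \<Longrightarrow> B i \<in> sets borel"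
    and \<sigma>: "\<bar>\<sigma>\<bar> = 1" and \<gamma>: "0 < \<gamma>" "\<gamma> < 1" and \<delta>: "0 < \<delta>" "\<delta> < 1"
    and dev: "\<And>i. i \<in> I \<Longrightarrow> R_Inf (card I) \<gamma> \<delta> \<le> \<sigma> * (\<gamma> - prob {\<omega> \<in> space M. X i \<omega> \<in> B i})"
  shows "1 - \<delta> \<le> prob {\<omega> \<in> space M. \<sigma> * (\<Sum>i\<in>I. indicator (B i) (X i \<omega>)) < \<sigma> * (\<gamma> * card I)}"
proof -
  have [measurable]: "X i \<in> borel_measurable M" "B i \<in> sets borel" if "i \<in> I" for i
    using indep B that unfolding indep_vars_def by auto
  define p where "p i = prob {\<omega> \<in> space M. X i \<omega> \<in> B i}" for i
  define N where "N = real (card I)"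
  define a where "a = (\<Sum>i\<in>I. p i) / N"
  define s where "s = \<sigma> * (\<gamma> - a)"
  have N: "0 < N" "1 \<le> card I" using I by (auto simp: N_def card_gt_0_iff Suc_le_eq)
  have "N * R_Inf (card I) \<gamma> \<delta> \<le> (\<Sum>i\<in>I. \<sigma> * (\<gamma> - p i))"
    using sum_mono[OF dev, of I] by (simp add: p_def N_def)
  also have "\<dots> = N * s"
    using N by (simp add: s_def a_def N_def sum_subtractf sum_distrib_left field_simps)
  finally have "R_Inf (card I) \<gamma> \<delta> \<le> s" using N by simp
  from Bernstein_exponent_ge_if_R_Inf_le[OF N(2) \<gamma> \<delta> this]
  have s: "0 < s" and cond: "ln (1 / \<delta>) * (2 * (\<gamma> * (1 - \<gamma>) + s) + 2 * s / 3) \<le> N * s\<^sup>2"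
    by (simp_all add: N_def)
  define V where "V = N * (\<gamma> * (1 - \<gamma>) + s)"
  have V: "0 < V" using N \<gamma> s by (simp add: V_def add_pos_nonneg)
  have a: "0 \<le> a" "a \<le> 1"
    using N sum_nonneg[of I p] sum_bounded_above[of I p 1] by (auto simp: a_def p_def N_def field_simps)
  have "(\<Sum>i\<in>I. p i * (1 - p i)) \<le> N * (a * (1 - a))"
    using sum_mult_one_minus_le_mean[OF I, of p] by (simp add: a_def N_def)
  also have "\<dots> \<le> N * (\<gamma> * (1 - \<gamma>) + \<bar>a - \<gamma>\<bar>)"
    using N a \<gamma> by (intro mult_left_mono mult_one_minus_le_add_abs) auto
  also have "\<bar>a - \<gamma>\<bar> = s"
    using \<sigma> abs_of_pos[OF s] unfolding s_def by (simp add: abs_mult abs_minus_commute)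
  finally have var: "(\<Sum>i\<in>I. p i * (1 - p i)) \<le> V" by (simp add: V_def)
  have "prob {\<omega> \<in> space M. N * s \<le> \<sigma> * (\<Sum>i\<in>I. indicator (B i) (X i \<omega>) - p i)}
      \<le> exp (- (N * s)\<^sup>2 / (2 * (V + N * s / 3)))"
    using N s by (intro Bernstein_ineq_indicator_sum I indep B \<sigma> var V) (auto simp: p_def)
  also have "\<dots> \<le> exp (- ln (1 / \<delta>))"
  proof -
    have "(N * s)\<^sup>2 / (2 * (V + N * s / 3))
        = N * (N * s\<^sup>2) / (N * (2 * (\<gamma> * (1 - \<gamma>) + s) + 2 * s / 3))"
      by (simp add: V_def power2_eq_square algebra_simps)
    also have "\<dots> = N * s\<^sup>2 / (2 * (\<gamma> * (1 - \<gamma>) + s) + 2 * s / 3)"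
      using N by simp
    finally have "(N * s)\<^sup>2 / (2 * (V + N * s / 3)) = N * s\<^sup>2 / (2 * (\<gamma> * (1 - \<gamma>) + s) + 2 * s / 3)" .
    moreover have "ln (1 / \<delta>) \<le> N * s\<^sup>2 / (2 * (\<gamma> * (1 - \<gamma>) + s) + 2 * s / 3)"
      using cond \<gamma> s by (subst pos_le_divide_eq) (auto intro: add_pos_pos)
    ultimately show ?thesis by simp
  qed
  also have "\<dots> = \<delta>" using \<delta> by (simp add: ln_div)
  finally have tail: "prob {\<omega> \<in> space M. N * s \<le> \<sigma> * (\<Sum>i\<in>I. indicator (B i) (X i \<omega>) - p i)} \<le> \<delta>" .
  have "N * s \<le> \<sigma> * (\<Sum>i\<in>I. indicator (B i) (X i \<omega>) - p i)
      \<longleftrightarrow> \<not> \<sigma> * (\<Sum>i\<in>I. indicator (B i) (X i \<omega>)) < \<sigma> * (\<gamma> * card I)" for \<omega>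
    using N by (simp add: s_def a_def N_def sum_subtractf field_simps not_less)
  then have "{\<omega> \<in> space M. N * s \<le> \<sigma> * (\<Sum>i\<in>I. indicator (B i) (X i \<omega>) - p i)}
      = space M - {\<omega> \<in> space M. \<sigma> * (\<Sum>i\<in>I. indicator (B i) (X i \<omega>)) < \<sigma> * (\<gamma> * card I)}"
    by auto
  moreover have "{\<omega> \<in> space M. \<sigma> * (\<Sum>i\<in>I. indicator (B i) (X i \<omega>)) < \<sigma> * (\<gamma> * card I)} \<in> events"
    by measurable
  ultimately show ?thesis using tail prob_compl by simp
qed

section \<open>Level sets of a continuous CDF\<close>

lemma mono_continuous_sublevel_eq_atMost:
  fixes F :: "real \<Rightarrow> real"
  assumes mono: "mono F" and cont: "continuous_on UNIV F" and a: "F a \<le> c" and b: "c < F b"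
  obtains q where "F q = c" "\<And>x. F x \<le> c \<longleftrightarrow> x \<le> q"
proof -
  define D where "D = {x. F x \<le> c}"
  have "closed D" unfolding D_def using cont by (intro closed_Collect_le continuous_on_const)
  moreover have "a \<in> D" using a by (simp add: D_def)
  moreover have "bdd_above D"
  proof (rule bdd_aboveI)
    fix x assume "x \<in> D"
    then show "x \<le> b" using b monoD[OF mono, of b x] by (force simp: D_def)
  qed
  ultimately have "Sup D \<in> D" by (intro closed_contains_Sup) auto
  have iff: "F x \<le> c \<longleftrightarrow> x \<le> Sup D" for x
    using \<open>Sup D \<in> D\<close> \<open>bdd_above D\<close> cSup_upper[of x D] monoD[OF mono, of x "Sup D"]
    by (auto simp: D_def)
  have "Sup D \<le> b" using iff[of b] b by linarith
  then obtain y where "Sup D \<le> y" "y \<le> b" "F y = c"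
    using IVT'[of F "Sup D" c b] \<open>Sup D \<in> D\<close> b cont
    by (auto simp: D_def intro: continuous_on_subset)
  then have "F (Sup D) = c" using iff[of y] by auto
  then show thesis using that iff by blast
qed

lemma mono_continuous_superlevel_eq_atLeast:
  fixes F :: "real \<Rightarrow> real"
  assumes mono: "mono F" and cont: "continuous_on UNIV F" and a: "F a < c" and b: "c \<le> F b"
  obtains q where "F q = c" "\<And>x. c \<le> F x \<longleftrightarrow> q \<le> x"
proof -
  have "mono (\<lambda>x. - F (- x))"
  proof (rule monoI)
    fix x y :: real assume "x \<le> y"
    then have "F (- y) \<le> F (- x)" by (intro monoD[OF mono]) simp
    then show "- F (- x) \<le> - F (- y)" by simp
  qed
  moreover have "continuous_on UNIV (\<lambda>x. - F (- x))"
    by (intro continuous_intros continuous_on_compose2[OF cont]) auto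
  ultimately obtain q where q: "- F (- q) = - c" "\<And>x. - F (- x) \<le> - c \<longleftrightarrow> x \<le> q"
    using mono_continuous_sublevel_eq_atMost[of "\<lambda>x. - F (- x)" "- b" "- c" "- a"] a b by auto
  have "c \<le> F x \<longleftrightarrow> - q \<le> x" for x
    using q(2)[of "- x"] by auto
  then show thesis using that[of "- q"] q(1) by simp
qed

context real_distribution
begin

lemma isCont_cdf_if_absolutely_continuous:
  assumes "absolutely_continuous lborel M"
  shows "isCont (cdf M) x"
proof -
  have "emeasure M {x} = 0" using absolutely_continuousD[OF assms] by auto
  then show ?thesis by (simp add: isCont_cdf measure_def)
qed

lemma cdf_below_and_above:
  assumes "0 < c" "c < 1"
  obtains a b where "cdf M a < c" "c < cdf M b"
proof -
  have "eventually (\<lambda>x. cdf M x < c) at_bot" using order_tendstoD(2)[OF cdf_lim_at_bot] assms by auto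
  moreover have "eventually (\<lambda>x. c < cdf M x) at_top"
    using order_tendstoD(1)[OF cdf_lim_at_top_prob] assms by auto
  ultimately show thesis using that by (metis eventually_at_bot_linorder eventually_at_top_linorder order_refl)
qed

lemma continuous_cdf_sublevel_eq_atMost:
  assumes "\<And>x. isCont (cdf M) x" "0 < c" "c < 1"
  obtains q where "cdf M q = c" "\<And>x. cdf M x \<le> c \<longleftrightarrow> x \<le> q"
proof -
  obtain a b where "cdf M a < c" "c < cdf M b" using cdf_below_and_above assms by blast
  then show thesis
    using mono_continuous_sublevel_eq_atMost[of "cdf M" a c b] that assms
    by (auto intro: monoI cdf_nondecreasing continuous_at_imp_continuous_on)
qed

lemma continuous_cdf_superlevel_eq_atLeast:
  assumes "\<And>x. isCont (cdf M) x" "0 < c" "c < 1"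
  obtains q where "cdf M q = c" "\<And>x. c \<le> cdf M x \<longleftrightarrow> q \<le> x"
proof -
  obtain a b where "cdf M a < c" "c < cdf M b" using cdf_below_and_above assms by blast
  then show thesis
    using mono_continuous_superlevel_eq_atLeast[of "cdf M" a c b] that assms
    by (auto intro: monoI cdf_nondecreasing continuous_at_imp_continuous_on)
qed

end

section \<open>Quantiles of the empirical CDF\<close>

lemma sum_indicator_comp_eq_card:
  "finite I \<Longrightarrow> (\<Sum>i\<in>I. indicator A (x i) :: real) = card {i\<in>I. x i \<in> A}"
  by (simp add: indicator_def Int_def)

lemma ecdf_mono: "y \<le> z \<Longrightarrow> ecdf n x y \<le> ecdf n x z"
  unfolding ecdf_def by (intro divide_right_mono of_nat_mono card_mono) auto

lemma obtain_max_sample_in_downset: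
  fixes x :: "'i \<Rightarrow> real"
  assumes "finite I" "i \<in> I" "P (x i)" and down: "\<And>a b. P b \<Longrightarrow> a \<le> b \<Longrightarrow> P a"
  obtains j where "j \<in> I" "P (x j)" "{i\<in>I. x i \<le> x j} = {i\<in>I. P (x i)}"
proof -
  define K where "K = {i\<in>I. P (x i)}"
  have "Max (x ` K) \<in> x ` K" using assms by (intro Max_in) (auto simp: K_def)
  then obtain j where j: "j \<in> K" "x j = Max (x ` K)" by auto
  have "{i\<in>I. x i \<le> x j} = K"
  proof (intro set_eqI iffI)
    fix i assume "i \<in> {i\<in>I. x i \<le> x j}"
    then show "i \<in> K" using down[of "x j" "x i"] j(1) by (simp add: K_def)
  next
    fix i assume "i \<in> K"
    then show "i \<in> {i\<in>I. x i \<le> x j}"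
      using j(2) Max_ge[of "x ` K" "x i"] assms(1) by (simp add: K_def)
  qed
  then show thesis using that j by (auto simp: K_def)
qed

lemma ecdf_upper_set_Inf_le_iff:
  fixes x :: "nat \<Rightarrow> real"
  assumes n: "n \<ge> 1" and up: "\<And>a b. P a \<Longrightarrow> a \<le> b \<Longrightarrow> P b" and "\<not> P 0" "P 1"
  shows "Inf {y. P (ecdf n x y)} \<le> y \<longleftrightarrow> P (ecdf n x y)"
proof -
  define S where "S = {y. P (ecdf n x y)}"
  define T where "T = S \<inter> x ` {1..n}"
  have sample_below: "\<exists>t\<in>T. t \<le> y" if "y \<in> S" for y
  proof -
    have "ecdf n x y \<noteq> 0" using that \<open>\<not> P 0\<close> by (auto simp: S_def)
    then obtain i where "i \<in> {1..n}" "x i \<le> y" by (fastforce simp: ecdf_def)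
    then obtain j where j: "j \<in> {1..n}" "x j \<le> y" "{i\<in>{1..n}. x i \<le> x j} = {i\<in>{1..n}. x i \<le> y}"
      by (rule obtain_max_sample_in_downset[where P="\<lambda>t. t \<le> y", OF finite_atLeastAtMost]) auto
    then have "ecdf n x (x j) = ecdf n x y" by (simp add: ecdf_def)
    then show ?thesis using that j by (auto simp: S_def T_def)
  qed
  have "Max (x ` {1..n}) \<in> S"
  proof -
    have "{i\<in>{1..n}. x i \<le> Max (x ` {1..n})} = {1..n}" by auto
    then show ?thesis using n \<open>P 1\<close> by (simp add: S_def ecdf_def)
  qed
  then have T: "T \<noteq> {}" "finite T" using sample_below by (auto simp: T_def)
  then have "Min T \<in> S" using Min_in[of T] by (simp add: T_def)
  have Min_le: "Min T \<le> y" if "y \<in> S" for y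
    using sample_below[OF that] Min_le[OF T(2)] by fastforce
  have "Inf S = Min T" using \<open>Min T \<in> S\<close> Min_le by (intro cInf_eq_minimum) auto
  show ?thesis
  proof
    assume "Inf {y. P (ecdf n x y)} \<le> y"
    then have "ecdf n x (Min T) \<le> ecdf n x y"
      using \<open>Inf S = Min T\<close> by (intro ecdf_mono) (simp add: S_def)
    then show "P (ecdf n x y)" using \<open>Min T \<in> S\<close> up by (simp add: S_def)
  next
    assume "P (ecdf n x y)"
    then show "Inf {y. P (ecdf n x y)} \<le> y"
      using \<open>Inf S = Min T\<close> Min_le by (simp add: S_def)
  qed
qed

lemma Qplus_ecdf_le_iff:
  assumes "n \<ge> 1" "0 \<le> \<gamma>" "\<gamma> < 1"
  shows "Qplus \<gamma> (ecdf n x) \<le> y \<longleftrightarrow> \<gamma> < ecdf n x y"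
  unfolding Qplus_def using assms by (intro ecdf_upper_set_Inf_le_iff) auto

lemma Qminus_ecdf_le_iff:
  assumes "n \<ge> 1" "0 < \<gamma>" "\<gamma> \<le> 1"
  shows "Qminus \<gamma> (ecdf n x) \<le> y \<longleftrightarrow> \<gamma> \<le> ecdf n x y"
  unfolding Qminus_def using assms by (intro ecdf_upper_set_Inf_le_iff) auto

lemma Qminus_ecdf_less_iff:
  fixes x :: "nat \<Rightarrow> real"
  assumes n: "n \<ge> 1" and \<gamma>: "0 < \<gamma>" "\<gamma> \<le> 1"
  shows "Qminus \<gamma> (ecdf n x) < q \<longleftrightarrow> \<gamma> * n \<le> card {i\<in>{1..n}. x i < q}"
proof -
  have "Qminus \<gamma> (ecdf n x) < q \<longleftrightarrow> (\<exists>y<q. \<gamma> \<le> ecdf n x y)"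
    using Qminus_ecdf_le_iff[OF assms] by (auto intro: le_less_trans)
  also have "\<dots> \<longleftrightarrow> \<gamma> * n \<le> card {i\<in>{1..n}. x i < q}"
  proof
    assume "\<exists>y<q. \<gamma> \<le> ecdf n x y"
    then obtain y where "y < q" "\<gamma> \<le> ecdf n x y" by blast
    then have "\<gamma> * n \<le> card {i\<in>{1..n}. x i \<le> y}"
      using n by (simp add: ecdf_def le_divide_eq)
    moreover have "card {i\<in>{1..n}. x i \<le> y} \<le> card {i\<in>{1..n}. x i < q}"
      using \<open>y < q\<close> by (intro card_mono) auto
    ultimately show "\<gamma> * n \<le> card {i\<in>{1..n}. x i < q}"
      by (meson of_nat_le_iff order_trans)
  next
    assume card: "\<gamma> * n \<le> card {i\<in>{1..n}. x i < q}"
    moreover have "0 < \<gamma> * n" using \<gamma> n by simp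
    ultimately have "{i\<in>{1..n}. x i < q} \<noteq> {}" by (metis card.empty not_le of_nat_0)
    then obtain i where "i \<in> {1..n}" "x i < q" by blast
    then obtain j where "x j < q" "{i\<in>{1..n}. x i \<le> x j} = {i\<in>{1..n}. x i < q}"
      by (rule obtain_max_sample_in_downset[where P="\<lambda>t. t < q", OF finite_atLeastAtMost]) auto
    then show "\<exists>y<q. \<gamma> \<le> ecdf n x y"
      using card n by (intro exI[of _ "x j"]) (simp add: ecdf_def le_divide_eq)
  qed
  finally show ?thesis .
qed

section \<open>The two quantile deviations\<close>

context prob_space
begin

lemma cdf_distr_eq_prob:
  assumes [measurable]: "X \<in> borel_measurable M"
  shows "cdf (distr M borel X) t = prob {\<omega> \<in> space M. X \<omega> \<le> t}"
  unfolding cdf_def by (subst measure_distr) (auto intro!: arg_cong[where f=prob])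

lemma prob_cdf_Qplus_deviation_le:
  fixes X :: "nat \<Rightarrow> 'a \<Rightarrow> real" and n :: nat
  defines "F \<equiv> \<lambda>i. cdf (distr M borel (X i))"
  assumes n: "n \<ge> 1" and indep: "indep_vars (\<lambda>_. borel) X {1..n}"
    and cont: "\<And>t. isCont (F n) t"
    and \<phi>: "\<And>i t. i \<in> {1..n} \<Longrightarrow> \<bar>F i t - F n t\<bar> \<le> \<phi>"
    and \<gamma>: "0 < \<gamma>" "\<gamma> < 1" and \<delta>: "0 < \<delta>" "\<delta> < 1"
  shows "1 - \<delta> \<le> prob {\<omega> \<in> space M. F n (Qplus \<gamma> (ecdf n (\<lambda>i. X i \<omega>))) - \<gamma> \<le> \<phi> + R_Inf n \<gamma> \<delta>}"
proof -
  have [measurable]: "X i \<in> borel_measurable M" if "i \<in> {1..n}" for i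
    using indep that unfolding indep_vars_def by auto
  interpret Fn: real_distribution "distr M borel (X n)" using n by simp
  define c where "c = \<gamma> + \<phi> + R_Inf n \<gamma> \<delta>"
  have "0 < c" using \<gamma> \<delta> \<phi>[of n 0] n R_Inf_nonneg[of \<gamma> \<delta> n] by (simp add: c_def)
  show ?thesis
  proof (cases "c < 1")
    case False
    then have "F n t - \<gamma> \<le> \<phi> + R_Inf n \<gamma> \<delta>" for t
      using Fn.cdf_bounded_prob[of t] by (simp add: F_def c_def)
    then show ?thesis using \<delta> by (simp add: prob_space)
  next
    case True
    obtain q where q: "F n q = c" "\<And>x. F n x \<le> c \<longleftrightarrow> x \<le> q"
      using Fn.continuous_cdf_sublevel_eq_atMost[of c] cont \<open>0 < c\<close> True unfolding F_def by blast
    have "F n (Qplus \<gamma> (ecdf n (\<lambda>i. X i \<omega>))) - \<gamma> \<le> \<phi> + R_Inf n \<gamma> \<delta>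
        \<longleftrightarrow> - 1 * (\<Sum>i\<in>{1..n}. indicator {..q} (X i \<omega>)) < - 1 * (\<gamma> * card {1..n})" for \<omega>
      using q(2) Qplus_ecdf_le_iff[of n \<gamma>] n \<gamma>
      by (simp add: c_def ecdf_def sum_indicator_comp_eq_card less_divide_eq algebra_simps)
    then have "{\<omega> \<in> space M. F n (Qplus \<gamma> (ecdf n (\<lambda>i. X i \<omega>))) - \<gamma> \<le> \<phi> + R_Inf n \<gamma> \<delta>}
        = {\<omega> \<in> space M. - 1 * (\<Sum>i\<in>{1..n}. indicator {..q} (X i \<omega>)) < - 1 * (\<gamma> * card {1..n})}"
      by auto
    also have "1 - \<delta> \<le> prob \<dots>"
    proof (rule prob_signed_indicator_sum_less_ge[OF _ _ indep _ _ \<gamma> \<delta>])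
      fix i assume i: "i \<in> {1..n}"
      have "R_Inf n \<gamma> \<delta> \<le> F i q - \<gamma>" using \<phi>[OF i, of q] q(1) by (simp add: c_def)
      then show "R_Inf (card {1..n}) \<gamma> \<delta> \<le> - 1 * (\<gamma> - prob {\<omega> \<in> space M. X i \<omega> \<in> {..q}})"
        using i by (simp add: F_def cdf_distr_eq_prob)
    qed (use n in auto)
    finally show ?thesis .
  qed
qed

lemma prob_cdf_Qminus_deviation_le:
  fixes X :: "nat \<Rightarrow> 'a \<Rightarrow> real" and n :: nat
  defines "F \<equiv> \<lambda>i. cdf (distr M borel (X i))"
  assumes n: "n \<ge> 1" and indep: "indep_vars (\<lambda>_. borel) X {1..n}"
    and cont: "\<And>t. isCont (F n) t"
    and \<phi>: "\<And>i t. i \<in> {1..n} \<Longrightarrow> \<bar>F i t - F n t\<bar> \<le> \<phi>"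
    and \<gamma>: "0 < \<gamma>" "\<gamma> < 1" and \<delta>: "0 < \<delta>" "\<delta> < 1"
  shows "1 - \<delta> \<le> prob {\<omega> \<in> space M. \<gamma> - F n (Qminus \<gamma> (ecdf n (\<lambda>i. X i \<omega>))) \<le> \<phi> + R_Inf n \<gamma> \<delta>}"
proof -
  have [measurable]: "X i \<in> borel_measurable M" if "i \<in> {1..n}" for i
    using indep that unfolding indep_vars_def by auto
  interpret Fn: real_distribution "distr M borel (X n)" using n by simp
  define c where "c = \<gamma> - \<phi> - R_Inf n \<gamma> \<delta>"
  have "c < 1" using \<gamma> \<delta> \<phi>[of n 0] n R_Inf_nonneg[of \<gamma> \<delta> n] by (simp add: c_def)
  show ?thesis
  proof (cases "0 < c")
    case False
    then have "\<gamma> - F n t \<le> \<phi> + R_Inf n \<gamma> \<delta>" for t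
      using Fn.cdf_nonneg[of t] by (simp add: F_def c_def)
    then show ?thesis using \<delta> by (simp add: prob_space)
  next
    case True
    obtain q where q: "F n q = c" "\<And>x. c \<le> F n x \<longleftrightarrow> q \<le> x"
      using Fn.continuous_cdf_superlevel_eq_atLeast[of c] cont \<open>c < 1\<close> True unfolding F_def by blast
    have "\<gamma> - F n (Qminus \<gamma> (ecdf n (\<lambda>i. X i \<omega>))) \<le> \<phi> + R_Inf n \<gamma> \<delta>
        \<longleftrightarrow> 1 * (\<Sum>i\<in>{1..n}. indicator {..<q} (X i \<omega>)) < 1 * (\<gamma> * card {1..n})" for \<omega>
    proof -
      have "\<gamma> - F n (Qminus \<gamma> (ecdf n (\<lambda>i. X i \<omega>))) \<le> \<phi> + R_Inf n \<gamma> \<delta>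
          \<longleftrightarrow> q \<le> Qminus \<gamma> (ecdf n (\<lambda>i. X i \<omega>))"
        using q(2)[of "Qminus \<gamma> (ecdf n (\<lambda>i. X i \<omega>))"] unfolding c_def by linarith
      also have "\<dots> \<longleftrightarrow> \<not> \<gamma> * n \<le> card {i\<in>{1..n}. X i \<omega> < q}"
        using Qminus_ecdf_less_iff[of n \<gamma> "\<lambda>i. X i \<omega>" q] n \<gamma> by (simp add: not_less[symmetric])
      finally show ?thesis by (simp add: sum_indicator_comp_eq_card not_le)
    qed
    then have "{\<omega> \<in> space M. \<gamma> - F n (Qminus \<gamma> (ecdf n (\<lambda>i. X i \<omega>))) \<le> \<phi> + R_Inf n \<gamma> \<delta>}
        = {\<omega> \<in> space M. 1 * (\<Sum>i\<in>{1..n}. indicator {..<q} (X i \<omega>)) < 1 * (\<gamma> * card {1..n})}"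
      by auto
    also have "1 - \<delta> \<le> prob \<dots>"
    proof (rule prob_signed_indicator_sum_less_ge[OF _ _ indep _ _ \<gamma> \<delta>])
      fix i assume i: "i \<in> {1..n}"
      have "prob {\<omega> \<in> space M. X i \<omega> \<in> {..<q}} \<le> F i q"
        using i by (simp add: F_def cdf_distr_eq_prob) (intro finite_measure_mono; auto)
      then show "R_Inf (card {1..n}) \<gamma> \<delta> \<le> 1 * (\<gamma> - prob {\<omega> \<in> space M. X i \<omega> \<in> {..<q}})"
        using \<phi>[OF i, of q] q(1) by (simp add: c_def)
    qed (use n in auto)
    finally show ?thesis .
  qed
qed

end

lemma le_Max_SUP:
  fixes f :: "'i \<Rightarrow> 'b \<Rightarrow> real"
  assumes "finite I" "i \<in> I" "\<And>t. f i t \<le> C"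
  shows "f i t \<le> Max ((\<lambda>i. SUP t. f i t) ` I)"
proof -
  have "f i t \<le> (SUP t. f i t)" using assms(3) by (intro cSUP_upper bdd_aboveI2) auto
  also have "\<dots> \<le> Max ((\<lambda>i. SUP t. f i t) ` I)" using assms(1,2) by (intro Max_ge) auto
  finally show ?thesis .
qed

lemma (in prob_space) abs_prob_diff_le_1: "\<bar>prob A - prob B\<bar> \<le> 1"
  unfolding abs_le_iff using prob_le_1[of A] prob_le_1[of B] measure_nonneg[of M A] measure_nonneg[of M B]
  by linarith

theorem lemma4:
  fixes M :: "'a measure" and X :: "nat \<Rightarrow> 'a \<Rightarrow> real" and n :: nat
    and \<gamma> \<delta> :: real
  assumes "prob_space M"
    and "n \<ge> 1"
    and "\<And>i. i \<in> {1..n} \<Longrightarrow> X i \<in> borel_measurable M"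
    and "prob_space.indep_vars M (\<lambda>_. borel) X {1..n}"
    and "\<And>i. i \<in> {1..n} \<Longrightarrow> absolutely_continuous lborel (distr M borel (X i))"
    and "0 < \<gamma>" "\<gamma> < 1" "0 < \<delta>" "\<delta> < 1"
  shows
   "let F = (\<lambda>i. cdf (distr M borel (X i)));
        \<phi> = Max ((\<lambda>i. SUP t. \<bar>F i t - F n t\<bar>) ` {1..n});
        B = \<phi> + (INF \<epsilon>\<in>{0<..<1}. R n \<epsilon> \<gamma> \<delta> / (1 - \<epsilon>))
    in measure M {\<omega> \<in> space M. F n (Qplus \<gamma> (ecdf n (\<lambda>i. X i \<omega>))) - \<gamma> \<le> B} \<ge> 1 - \<delta>
     \<and> measure M {\<omega> \<in> space M. \<gamma> - F n (Qminus \<gamma> (ecdf n (\<lambda>i. X i \<omega>))) \<le> B} \<ge> 1 - \<delta>"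
proof -
  interpret prob_space M by (fact assms(1))
  define F where "F = (\<lambda>i. cdf (distr M borel (X i)))"
  define \<phi> where "\<phi> = Max ((\<lambda>i. SUP t. \<bar>F i t - F n t\<bar>) ` {1..n})"
  have n: "n \<in> {1..n}" using assms(2) by simp
  have "real_distribution (distr M borel (X n))" using assms(3)[OF n] by simp
  have "\<bar>F i t - F n t\<bar> \<le> \<phi>" if "i \<in> {1..n}" for i t
    unfolding \<phi>_def using that n assms(3)
    by (intro le_Max_SUP[where C = 1]) (auto simp: F_def cdf_distr_eq_prob abs_prob_diff_le_1)
  moreover have "isCont (F n) t" for t
    unfolding F_def using real_distribution.isCont_cdf_if_absolutely_continuous[OF _ assms(5)[OF n]] \<open>real_distribution _\<close> .
  ultimately show ?thesis
    using prob_cdf_Qplus_deviation_le[of n X] prob_cdf_Qminus_deviation_le[of n X] assms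
    unfolding Let_def F_def \<phi>_def R_Inf_def by blast
qed

end
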